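(* Let $\mathbf{A}\in\mathbb{R}^{M\times N}$, $\mathbf{Y}\in\mathbb{R}^{M\times L}$, and let $(\mathbf{g}(t),\mathbf{V}(t))$, $t\ge0$, evolve under the continuous gradient flow of $\mathcal{L}(\mathbf{g},\mathbf{V})=\Vert\mathbf{Y}-\mathbf{A}((\mathbf{g}^{\odot 2}\mathbf{1}_L)\odot\mathbf{V})\Vert_F^2$. Fix $i\in[N]$ and write $\mathbf{V}_{i:}(t)$ for the $i$-th row of $\mathbf{V}(t)$. Case I: if $\frac{1}{\sqrt2}|g_i(0)|=\Vert\mathbf{V}_{i:}(0)\Vert=0$, then $\frac{1}{\sqrt2}|g_i(t)|=\Vert\mathbf{V}_{i:}(t)\Vert=0$ for all $t>0$. Case II: if $\frac{1}{\sqrt2}|g_i(0)|=\Vert\mathbf{V}_{i:}(0)\Vert>0$, then $\frac{1}{\sqrt2}|g_i(t)|=\Vert\mathbf{V}_{i:}(t)\Vert>0$ for all $t>0$.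
   Context: $\odot$ is the entrywise product, $\mathbf{1}_L$ the $1\times L$ all-ones row vector, so the estimate has entries $g_i^2V_{ij}$; $\Vert\cdot\Vert$ on a row is the Euclidean norm. Gradient flow: $\frac{d}{dt}g_l=-\partial\mathcal{L}/\partial g_l$, $\frac{d}{dt}V_{lm}=-\partial\mathcal{L}/\partial V_{lm}$ along the curve. *)

theory Defs
  imports "HOL-Analysis.Analysis"
begin

definition lossGV ::
  "real^'n^'m \<Rightarrow> real^'l^'m \<Rightarrow> real^'n \<Rightarrow> real^'l^'n \<Rightarrow> real" where
  "lossGV A Y g V =
     (\<Sum>m\<in>UNIV. \<Sum>l\<in>UNIV. (Y$m$l - (\<Sum>n\<in>UNIV. A$m$n * ((g$n)^2 * V$n$l)))^2)"

definition dLdg ::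
  "real^'n^'m \<Rightarrow> real^'l^'m \<Rightarrow> real^'n \<Rightarrow> real^'l^'n \<Rightarrow> 'n \<Rightarrow> real" where
  "dLdg A Y g V k =
     deriv (\<lambda>s. lossGV A Y (\<chi> j. if j = k then s else g$j) V) (g$k)"

definition dLdV ::
  "real^'n^'m \<Rightarrow> real^'l^'m \<Rightarrow> real^'n \<Rightarrow> real^'l^'n \<Rightarrow> 'n \<Rightarrow> 'l \<Rightarrow> real" where
  "dLdV A Y g V k l =
     deriv (\<lambda>s. lossGV A Y g (\<chi> j. \<chi> j'. if j = k \<and> j' = l then s else V$j$j')) (V$k$l)"

end

theory Submission
  imports Defs
begin

text \<open>
  Write R = Y - A((g^2 1_L) o V) for the residual and s_i = <(A^T R)_i, V_i> for the correlation
  of the i-th row of V with the back-projected residual. Along the flow g_i' = 4 g_i s_i and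
  V_il' = 2 g_i^2 (A^T R)_il, so g_i^2/2 and ||V_i||^2 both have derivative 4 g_i^2 s_i and their
  difference is conserved: balance at time 0 persists. On a balanced row u = ||V_i||^2 then obeys
  the linear equation u' = 8 s_i u with continuous s_i, and comparing u with exponentials shows
  that u(t) vanishes exactly when u(0) does.
\<close>

lemma nonneg_derivative_imp_increasing_within:
  fixes f f' :: "real \<Rightarrow> real"
  assumes deriv: "\<And>t. a \<le> t \<Longrightarrow> (f has_real_derivative f' t) (at t within {a..})"
    and nonneg: "\<And>t. a < t \<Longrightarrow> t < b \<Longrightarrow> 0 \<le> f' t"
    and "a \<le> b"
  shows "f a \<le> f b"
proof (rule DERIV_nonneg_imp_increasing_open[OF \<open>a \<le> b\<close>])
  fix t assume t: "a < t" "t < b"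
  then have "at t within {a..} = at t"
    by (intro at_within_interior) auto
  with deriv[of t] nonneg[OF t] t show "\<exists>y. DERIV f t :> y \<and> 0 \<le> y"
    by auto
next
  have "continuous_on {a..} f"
    using deriv by (auto simp: continuous_on_eq_continuous_within intro: DERIV_continuous)
  then show "continuous_on {a..b} f"
    by (rule continuous_on_subset) auto
qed

lemma linear_ode_exp_bounds:
  fixes u a :: "real \<Rightarrow> real"
  assumes deriv: "\<And>t. 0 \<le> t \<Longrightarrow> (u has_real_derivative a t * u t) (at t within {0..})"
    and nonneg: "\<And>t. 0 \<le> t \<Longrightarrow> 0 \<le> u t"
    and bound: "\<And>t. 0 \<le> t \<Longrightarrow> t \<le> T \<Longrightarrow> \<bar>a t\<bar> \<le> B"
    and "0 \<le> T"
  shows "u 0 * exp (- B * T) \<le> u T" and "u T \<le> u 0 * exp (B * T)"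
proof -
  have "u 0 * exp (B * 0) \<le> u T * exp (B * T)"
  proof (rule nonneg_derivative_imp_increasing_within[OF _ _ \<open>0 \<le> T\<close>])
    show "((\<lambda>t. u t * exp (B * t)) has_real_derivative (a t + B) * u t * exp (B * t))
        (at t within {0..})" if "0 \<le> t" for t
      by (rule derivative_eq_intros deriv[OF that] refl | simp add: algebra_simps)+
    show "0 \<le> (a t + B) * u t * exp (B * t)" if "0 < t" "t < T" for t
      using bound[of t] nonneg[of t] that by simp
  qed
  then show "u 0 * exp (- B * T) \<le> u T"
    by (simp add: exp_minus field_simps)
  have "- (u 0 * exp (- B * 0)) \<le> - (u T * exp (- B * T))"
  proof (rule nonneg_derivative_imp_increasing_within[OF _ _ \<open>0 \<le> T\<close>])
    show "((\<lambda>t. - (u t * exp (- B * t))) has_real_derivative (B - a t) * u t * exp (- B * t))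
        (at t within {0..})" if "0 \<le> t" for t
      by (rule derivative_eq_intros deriv[OF that] refl | simp add: algebra_simps)+
    show "0 \<le> (B - a t) * u t * exp (- B * t)" if "0 < t" "t < T" for t
      using bound[of t] nonneg[of t] that by simp
  qed
  then show "u T \<le> u 0 * exp (B * T)"
    by (simp add: exp_minus field_simps)
qed

lemma linear_ode_eq_0_iff:
  fixes u a :: "real \<Rightarrow> real"
  assumes deriv: "\<And>t. 0 \<le> t \<Longrightarrow> (u has_real_derivative a t * u t) (at t within {0..})"
    and nonneg: "\<And>t. 0 \<le> t \<Longrightarrow> 0 \<le> u t"
    and cont: "continuous_on {0..} a"
    and "0 \<le> T"
  shows "u T = 0 \<longleftrightarrow> u 0 = 0"
proof -
  have "compact (a ` {0..T})"
    by (rule compact_continuous_image[OF continuous_on_subset[OF cont]]) auto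
  then obtain B where "\<And>t. t \<in> {0..T} \<Longrightarrow> \<bar>a t\<bar> \<le> B"
    by (meson compact_imp_bounded bounded_real image_eqI)
  then have "u 0 * exp (- B * T) \<le> u T" "u T \<le> u 0 * exp (B * T)"
    using linear_ode_exp_bounds[OF deriv nonneg _ \<open>0 \<le> T\<close>] by auto
  moreover have "0 \<le> u 0" "0 \<le> u T"
    using nonneg \<open>0 \<le> T\<close> by auto
  ultimately show ?thesis
    by (smt (verit) mult_eq_0_iff mult_nonneg_nonneg exp_gt_zero)
qed

lemma scaled_abs_eq_iff:
  fixes x y :: real
  assumes "0 \<le> y"
  shows "(1 / sqrt 2) * \<bar>x\<bar> = y \<longleftrightarrow> x^2 / 2 = y^2"
proof -
  have "0 \<le> (1 / sqrt 2) * \<bar>x\<bar>"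
    by simp
  then have "(1 / sqrt 2) * \<bar>x\<bar> = y \<longleftrightarrow> ((1 / sqrt 2) * \<bar>x\<bar>)^2 = y^2"
    using power2_eq_iff_nonneg assms by blast
  also have "\<dots> \<longleftrightarrow> x^2 / 2 = y^2"
    by (simp add: power_mult_distrib power_divide)
  finally show ?thesis .
qed

definition residual ::
  "real^'n^'m \<Rightarrow> real^'l^'m \<Rightarrow> real^'n \<Rightarrow> real^'l^'n \<Rightarrow> real^'l^'m" where
  "residual A Y g V = (\<chi> m l. Y$m$l - (\<Sum>n\<in>UNIV. A$m$n * ((g$n)^2 * V$n$l)))"

definition backprojected_residual ::
  "real^'n^'m \<Rightarrow> real^'l^'m \<Rightarrow> real^'n \<Rightarrow> real^'l^'n \<Rightarrow> real^'l^'n" where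
  "backprojected_residual A Y g V = (\<chi> k l. \<Sum>m\<in>UNIV. A$m$k * residual A Y g V $ m $ l)"

lemma lossGV_eq_sum_residual_squares:
  "lossGV A Y g V = (\<Sum>m\<in>UNIV. \<Sum>l\<in>UNIV. (residual A Y g V $ m $ l)^2)"
  by (simp add: lossGV_def residual_def)

lemma lossGV_has_derivative:
  assumes "\<And>m l. ((\<lambda>s. residual A Y (G s) (W s) $ m $ l) has_real_derivative R' m l) (at x)"
  shows "((\<lambda>s. lossGV A Y (G s) (W s)) has_real_derivative
           (\<Sum>m\<in>UNIV. \<Sum>l\<in>UNIV. 2 * residual A Y (G x) (W x) $ m $ l * R' m l)) (at x)"
  unfolding lossGV_eq_sum_residual_squares
  by (rule derivative_eq_intros assms refl | simp add: mult_ac)+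

lemma residual_has_derivative_g:
  "((\<lambda>s. residual A Y (\<chi> j. if j = k then s else g$j) V $ m $ l) has_real_derivative
     - (2 * A$m$k * x * V$k$l)) (at x)"
proof -
  have "residual A Y (\<chi> j. if j = k then s else g$j) V $ m $ l =
      Y$m$l - (\<Sum>n\<in>UNIV-{k}. A$m$n * ((g$n)^2 * V$n$l)) - A$m$k * V$k$l * s^2" for s
    by (auto simp: residual_def sum.remove[of UNIV k] algebra_simps intro!: sum.cong)
  then show ?thesis
    by (simp only:) (rule derivative_eq_intros refl | simp)+
qed

lemma residual_has_derivative_V:
  "((\<lambda>s. residual A Y g (\<chi> j j'. if j = k \<and> j' = l then s else V$j$j') $ m $ l') has_real_derivative
     - (if l' = l then A$m$k * (g$k)^2 else 0)) (at x)"
proof -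
  have eq: "residual A Y g (\<chi> j j'. if j = k \<and> j' = l then s else V$j$j') $ m $ l' =
      Y$m$l' - (\<Sum>n\<in>UNIV-{k}. A$m$n * ((g$n)^2 * V$n$l'))
        - A$m$k * (g$k)^2 * (if l' = l then s else V$k$l')" for s
    by (auto simp: residual_def sum.remove[of UNIV k] algebra_simps intro!: sum.cong)
  then show ?thesis
    unfolding eq by (cases "l' = l") (auto intro!: derivative_eq_intros)
qed

lemma dLdg_eq:
  "dLdg A Y g V k = - 4 * g$k * (backprojected_residual A Y g V $ k \<bullet> V $ k)"
proof -
  have "(\<chi> j. if j = k then g$k else g$j) = g"
    by (simp add: vec_eq_iff)
  then have "((\<lambda>s. lossGV A Y (\<chi> j. if j = k then s else g$j) V) has_real_derivative
      (\<Sum>m\<in>UNIV. \<Sum>l\<in>UNIV. 2 * residual A Y g V $ m $ l * - (2 * A$m$k * g$k * V$k$l)))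
      (at (g$k))"
    using lossGV_has_derivative[where G = "\<lambda>s. \<chi> j. if j = k then s else g$j"
        and W = "\<lambda>_. V" and x = "g$k", OF residual_has_derivative_g] by simp
  also have "(\<Sum>m\<in>UNIV. \<Sum>l\<in>UNIV. 2 * residual A Y g V $ m $ l * - (2 * A$m$k * g$k * V$k$l)) =
      - 4 * g$k * (backprojected_residual A Y g V $ k \<bullet> V $ k)"
    unfolding inner_vec_def backprojected_residual_def
    by (simp add: sum_distrib_left sum_distrib_right sum_negf mult_ac) (subst sum.swap, simp add: mult_ac)
  finally show ?thesis
    unfolding dLdg_def by (rule DERIV_imp_deriv)
qed

lemma dLdV_eq:
  "dLdV A Y g V k l = - 2 * (g$k)^2 * backprojected_residual A Y g V $ k $ l"
proof -
  have "(\<chi> j j'. if j = k \<and> j' = l then V$k$l else V$j$j') = V"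
    by (simp add: vec_eq_iff)
  then have "((\<lambda>s. lossGV A Y g (\<chi> j j'. if j = k \<and> j' = l then s else V$j$j'))
      has_real_derivative (\<Sum>m\<in>UNIV. \<Sum>l'\<in>UNIV.
        2 * residual A Y g V $ m $ l' * - (if l' = l then A$m$k * (g$k)^2 else 0))) (at (V$k$l))"
    using lossGV_has_derivative[where G = "\<lambda>_. g"
        and W = "\<lambda>s. \<chi> j j'. if j = k \<and> j' = l then s else V$j$j'" and x = "V$k$l",
        OF residual_has_derivative_V] by simp
  also have "(\<Sum>m\<in>UNIV. \<Sum>l'\<in>UNIV.
        2 * residual A Y g V $ m $ l' * - (if l' = l then A$m$k * (g$k)^2 else 0)) =
      - 2 * (g$k)^2 * backprojected_residual A Y g V $ k $ l"
    by (simp add: if_distrib[of "\<lambda>x. _ * x"] sum.delta cong: if_cong)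
      (simp add: backprojected_residual_def sum_distrib_left sum_negf mult_ac)
  finally show ?thesis
    unfolding dLdV_def by (rule DERIV_imp_deriv)
qed

locale gradient_flow =
  fixes A :: "real^'n^'m" and Y :: "real^'l^'m"
    and g :: "real \<Rightarrow> real^'n" and V :: "real \<Rightarrow> real^'l^'n"
  assumes flow_g: "\<And>t k. t \<ge> 0 \<Longrightarrow>
      ((\<lambda>s. g s $ k) has_real_derivative (- dLdg A Y (g t) (V t) k)) (at t within {0..})"
    and flow_V: "\<And>t k l. t \<ge> 0 \<Longrightarrow>
      ((\<lambda>s. V s $ k $ l) has_real_derivative (- dLdV A Y (g t) (V t) k l)) (at t within {0..})"
begin

lemma g_has_derivative:
  "0 \<le> t \<Longrightarrow> ((\<lambda>t. g t $ k) has_real_derivative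
     4 * g t $ k * (backprojected_residual A Y (g t) (V t) $ k \<bullet> V t $ k)) (at t within {0..})"
  using flow_g by (simp add: dLdg_eq)

lemma V_has_derivative:
  "0 \<le> t \<Longrightarrow> ((\<lambda>t. V t $ k $ l) has_real_derivative
     2 * (g t $ k)^2 * backprojected_residual A Y (g t) (V t) $ k $ l) (at t within {0..})"
  using flow_V by (simp add: dLdV_eq)

lemma row_norm_sq_has_derivative:
  assumes "0 \<le> t"
  shows "((\<lambda>t. (norm (V t $ k))^2) has_real_derivative
     4 * (g t $ k)^2 * (backprojected_residual A Y (g t) (V t) $ k \<bullet> V t $ k)) (at t within {0..})"
  unfolding power2_norm_eq_inner inner_vec_def
  by (rule derivative_eq_intros V_has_derivative[OF assms] refl | simp add: sum_distrib_left mult_ac)+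

lemma balance_conserved:
  assumes "0 \<le> t"
  shows "(g t $ k)^2 / 2 - (norm (V t $ k))^2 = (g 0 $ k)^2 / 2 - (norm (V 0 $ k))^2"
proof -
  have "\<exists>c. \<forall>t\<in>{0..}. (g t $ k)^2 / 2 - (norm (V t $ k))^2 = c"
  proof (rule has_field_derivative_zero_constant)
    fix t :: real
    assume "t \<in> {0..}"
    then have "0 \<le> t" by simp
    have "((\<lambda>t. (g t $ k)^2 / 2) has_real_derivative
        4 * (g t $ k)^2 * (backprojected_residual A Y (g t) (V t) $ k \<bullet> V t $ k)) (at t within {0..})"
      by (rule derivative_eq_intros g_has_derivative[OF \<open>0 \<le> t\<close>] refl | simp add: power2_eq_square)+
    from DERIV_diff[OF this row_norm_sq_has_derivative[OF \<open>0 \<le> t\<close>, of k]]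
    show "((\<lambda>t. (g t $ k)^2 / 2 - (norm (V t $ k))^2) has_real_derivative 0) (at t within {0..})"
      by simp
  qed simp
  with assms show ?thesis
    by force
qed

lemma continuous_on_row_correlation:
  "continuous_on {0..} (\<lambda>t. backprojected_residual A Y (g t) (V t) $ k \<bullet> V t $ k)"
proof -
  have cont_g: "continuous_on {0..} (\<lambda>t. g t $ n)" for n
    using flow_g by (auto simp: continuous_on_eq_continuous_within intro: DERIV_continuous)
  have cont_V: "continuous_on {0..} (\<lambda>t. V t $ n $ l)" for n l
    using flow_V by (auto simp: continuous_on_eq_continuous_within intro: DERIV_continuous)
  show ?thesis
    unfolding inner_vec_def inner_real_def backprojected_residual_def residual_def vec_lambda_beta
    by (intro continuous_intros cont_g cont_V)
qed

lemma balanced_row_norm_sq_has_derivative: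
  assumes balanced: "(g 0 $ k)^2 / 2 = (norm (V 0 $ k))^2" and "0 \<le> t"
  shows "((\<lambda>t. (norm (V t $ k))^2) has_real_derivative
     8 * (backprojected_residual A Y (g t) (V t) $ k \<bullet> V t $ k) * (norm (V t $ k))^2)
     (at t within {0..})"
proof -
  have "(g t $ k)^2 = 2 * (norm (V t $ k))^2"
    using balance_conserved[OF \<open>0 \<le> t\<close>, of k] balanced by simp
  with row_norm_sq_has_derivative[OF \<open>0 \<le> t\<close>, of k] show ?thesis
    by (simp add: mult_ac)
qed

lemma balanced_row_eq_0_iff:
  assumes "(g 0 $ k)^2 / 2 = (norm (V 0 $ k))^2" and "0 \<le> T"
  shows "V T $ k = 0 \<longleftrightarrow> V 0 $ k = 0"
proof -
  have "(norm (V T $ k))^2 = 0 \<longleftrightarrow> (norm (V 0 $ k))^2 = 0"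
  proof (rule linear_ode_eq_0_iff
      [where a = "\<lambda>t. 8 * (backprojected_residual A Y (g t) (V t) $ k \<bullet> V t $ k)"])
    show "continuous_on {0..} (\<lambda>t. 8 * (backprojected_residual A Y (g t) (V t) $ k \<bullet> V t $ k))"
      by (intro continuous_on_mult_left continuous_on_row_correlation)
  qed (use balanced_row_norm_sq_has_derivative[OF assms(1)] \<open>0 \<le> T\<close> in auto)
  then show ?thesis
    by simp
qed

end

theorem lemmaB6:
  fixes A :: "real^'n^'m" and Y :: "real^'l^'m"
    and g :: "real \<Rightarrow> real^'n" and V :: "real \<Rightarrow> real^'l^'n"
    and i :: 'n
  assumes flow_g: "\<And>t k. t \<ge> 0 \<Longrightarrow>
      ((\<lambda>s. g s $ k) has_real_derivative (- dLdg A Y (g t) (V t) k)) (at t within {0..})"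
    and flow_V: "\<And>t k l. t \<ge> 0 \<Longrightarrow>
      ((\<lambda>s. V s $ k $ l) has_real_derivative (- dLdV A Y (g t) (V t) k l)) (at t within {0..})"
  shows "((1 / sqrt 2) * \<bar>g 0 $ i\<bar> = norm (V 0 $ i) \<and> norm (V 0 $ i) = 0 \<longrightarrow>
            (\<forall>t>0. (1 / sqrt 2) * \<bar>g t $ i\<bar> = norm (V t $ i) \<and> norm (V t $ i) = 0))
       \<and> ((1 / sqrt 2) * \<bar>g 0 $ i\<bar> = norm (V 0 $ i) \<and> norm (V 0 $ i) > 0 \<longrightarrow>
            (\<forall>t>0. (1 / sqrt 2) * \<bar>g t $ i\<bar> = norm (V t $ i) \<and> norm (V t $ i) > 0))"
proof -
  interpret gradient_flow A Y g V
    using flow_g flow_V by unfold_locales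
  have balanced_t: "(1 / sqrt 2) * \<bar>g t $ i\<bar> = norm (V t $ i)"
    and vanishes_iff: "V t $ i = 0 \<longleftrightarrow> V 0 $ i = 0"
    if "(1 / sqrt 2) * \<bar>g 0 $ i\<bar> = norm (V 0 $ i)" and "0 < t" for t
  proof -
    have balanced_0: "(g 0 $ i)^2 / 2 = (norm (V 0 $ i))^2"
      using that(1) unfolding scaled_abs_eq_iff[OF norm_ge_zero] .
    have "0 \<le> t"
      using \<open>0 < t\<close> by (rule less_imp_le)
    show "(1 / sqrt 2) * \<bar>g t $ i\<bar> = norm (V t $ i)"
      unfolding scaled_abs_eq_iff[OF norm_ge_zero]
      using balance_conserved[OF \<open>0 \<le> t\<close>, of i] balanced_0 by linarith
    show "V t $ i = 0 \<longleftrightarrow> V 0 $ i = 0"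
      using balanced_0 \<open>0 \<le> t\<close> by (rule balanced_row_eq_0_iff)
  qed
  show ?thesis
    using balanced_t vanishes_iff by auto
qed

end
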